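(* Let $\mathcal F\subseteq\mathcal G$ be two prime lattice filters of an MV-algebra $\mathcal L$ with $\mathcal K(\mathcal F)=\mathcal K(\mathcal G)$. Then $$\mathcal K(\mathcal F\sqsubseteq\!\!\to\mathcal G)=\mathcal K(\mathcal F).$$
   Context: $\mathcal L=(L,\oplus,\lnot,0)$ is an MV-algebra. We write $1=\lnot 0$, $x\otimes y=\lnot(\lnot x\oplus\lnot y)$, and $x\to y=\lnot x\oplus y$, and use the usual lattice order. A lattice filter is a nonempty upward-closed subset closed under $\wedge$. It is prime if it is proper and $a\vee b\in\mathcal F$ implies $a\in\mathcal F$ or $b\in\mathcal F$. For an upward-closed $\mathcal F$ and $a\in L$, let $\mathcal F_a=\{z: z\to a\notin\mathcal F\}$. The kernel is $\mathcal K(\mathcal F)=\{z:\forall a\notin\mathcal F,\ z\to a\notin\mathcal F\}$. For $\mathcal F\subseteq\mathcal G$ we put $\mathcal F\sqsubseteq\!\!\to\mathcal G=\bigcap_{a\in L\setminus\mathcal G}\mathcal F_a$. *)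

theory Defs
  imports Main
begin

definition mv_algebra :: "'a set \<Rightarrow> ('a \<Rightarrow> 'a \<Rightarrow> 'a) \<Rightarrow> ('a \<Rightarrow> 'a) \<Rightarrow> 'a \<Rightarrow> bool" where
  "mv_algebra L pl ng z \<longleftrightarrow>
     z \<in> L \<and>
     (\<forall>x\<in>L. \<forall>y\<in>L. pl x y \<in> L) \<and>
     (\<forall>x\<in>L. ng x \<in> L) \<and>
     (\<forall>x\<in>L. \<forall>y\<in>L. \<forall>w\<in>L. pl x (pl y w) = pl (pl x y) w) \<and>
     (\<forall>x\<in>L. \<forall>y\<in>L. pl x y = pl y x) \<and>
     (\<forall>x\<in>L. pl x z = x) \<and>
     (\<forall>x\<in>L. ng (ng x) = x) \<and>
     (\<forall>x\<in>L. pl x (ng z) = ng z) \<and>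
     (\<forall>x\<in>L. \<forall>y\<in>L. pl (ng (pl (ng x) y)) y = pl (ng (pl (ng y) x)) x)"

definition mv_one :: "('a \<Rightarrow> 'a) \<Rightarrow> 'a \<Rightarrow> 'a" where
  "mv_one ng z = ng z"

definition mv_imp :: "('a \<Rightarrow> 'a \<Rightarrow> 'a) \<Rightarrow> ('a \<Rightarrow> 'a) \<Rightarrow> 'a \<Rightarrow> 'a \<Rightarrow> 'a" where
  "mv_imp pl ng x y = pl (ng x) y"

definition mv_le :: "('a \<Rightarrow> 'a \<Rightarrow> 'a) \<Rightarrow> ('a \<Rightarrow> 'a) \<Rightarrow> 'a \<Rightarrow> 'a \<Rightarrow> 'a \<Rightarrow> bool" where
  "mv_le pl ng z x y \<longleftrightarrow> mv_imp pl ng x y = mv_one ng z"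

definition mv_sup :: "('a \<Rightarrow> 'a \<Rightarrow> 'a) \<Rightarrow> ('a \<Rightarrow> 'a) \<Rightarrow> 'a \<Rightarrow> 'a \<Rightarrow> 'a" where
  "mv_sup pl ng x y = pl (ng (pl (ng x) y)) y"

definition mv_inf :: "('a \<Rightarrow> 'a \<Rightarrow> 'a) \<Rightarrow> ('a \<Rightarrow> 'a) \<Rightarrow> 'a \<Rightarrow> 'a \<Rightarrow> 'a" where
  "mv_inf pl ng x y = ng (mv_sup pl ng (ng x) (ng y))"

definition up_closed :: "'a set \<Rightarrow> ('a \<Rightarrow> 'a \<Rightarrow> 'a) \<Rightarrow> ('a \<Rightarrow> 'a) \<Rightarrow> 'a \<Rightarrow> 'a set \<Rightarrow> bool" where
  "up_closed L pl ng z F \<longleftrightarrow> F \<subseteq> L \<and>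
     (\<forall>x\<in>F. \<forall>y\<in>L. mv_le pl ng z x y \<longrightarrow> y \<in> F)"

definition lattice_filter :: "'a set \<Rightarrow> ('a \<Rightarrow> 'a \<Rightarrow> 'a) \<Rightarrow> ('a \<Rightarrow> 'a) \<Rightarrow> 'a \<Rightarrow> 'a set \<Rightarrow> bool" where
  "lattice_filter L pl ng z F \<longleftrightarrow> F \<noteq> {} \<and> up_closed L pl ng z F \<and>
     (\<forall>x\<in>F. \<forall>y\<in>F. mv_inf pl ng x y \<in> F)"

definition prime_filter :: "'a set \<Rightarrow> ('a \<Rightarrow> 'a \<Rightarrow> 'a) \<Rightarrow> ('a \<Rightarrow> 'a) \<Rightarrow> 'a \<Rightarrow> 'a set \<Rightarrow> bool" where
  "prime_filter L pl ng z F \<longleftrightarrow> lattice_filter L pl ng z F \<and> F \<noteq> L \<and>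
     (\<forall>a\<in>L. \<forall>b\<in>L. mv_sup pl ng a b \<in> F \<longrightarrow> a \<in> F \<or> b \<in> F)"

definition filt_sub :: "'a set \<Rightarrow> ('a \<Rightarrow> 'a \<Rightarrow> 'a) \<Rightarrow> ('a \<Rightarrow> 'a) \<Rightarrow> 'a set \<Rightarrow> 'a \<Rightarrow> 'a set" where
  "filt_sub L pl ng F a = {w \<in> L. mv_imp pl ng w a \<notin> F}"

definition kernel :: "'a set \<Rightarrow> ('a \<Rightarrow> 'a \<Rightarrow> 'a) \<Rightarrow> ('a \<Rightarrow> 'a) \<Rightarrow> 'a set \<Rightarrow> 'a set" where
  "kernel L pl ng F = {w \<in> L. \<forall>a \<in> L - F. mv_imp pl ng w a \<notin> F}"

text \<open>F \<sqsubseteq>\<rightarrow> G = \<Inter>_{a \<in> L - G} F_a (intersection taken inside L)\<close>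
definition filt_arrow :: "'a set \<Rightarrow> ('a \<Rightarrow> 'a \<Rightarrow> 'a) \<Rightarrow> ('a \<Rightarrow> 'a) \<Rightarrow> 'a set \<Rightarrow> 'a set \<Rightarrow> 'a set" where
  "filt_arrow L pl ng F G = L \<inter> (\<Inter>a \<in> L - G. filt_sub L pl ng F a)"

end

theory Submission
  imports Defs
begin

(*
  Write H = F \<sqsubseteq>\<rightarrow> G = {x. \<forall>b \<notin> G. x \<rightarrow> b \<notin> F}.  The theorem K(H) = K(F) is
  proved as two inclusions, each needing only part of the hypotheses:
  - K(F) \<subseteq> K(H) holds for every upward-closed F with K(F) \<subseteq> K(G), using the
    inequality a \<rightarrow> b \<le> (w \<rightarrow> a) \<rightarrow> (w \<rightarrow> b);
  - K(H) \<subseteq> K(F) holds for prime F \<subseteq> G with K(G) \<subseteq> K(F).  Its core is that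
    a \<rightarrow> g \<in> H whenever a \<notin> F and g \<in> G; this uses that the kernel of a prime
    filter is itself prime and linear (it contains u \<rightarrow> v or v \<rightarrow> u).
*)

locale mv_alg =
  fixes L :: "'a set" and pl :: "'a \<Rightarrow> 'a \<Rightarrow> 'a" and ng :: "'a \<Rightarrow> 'a" and z :: 'a
  assumes mv: "mv_algebra L pl ng z"
begin

lemma z_in [simp]: "z \<in> L"
  using mv unfolding mv_algebra_def by blast
lemma pl_in [simp]: "x \<in> L \<Longrightarrow> y \<in> L \<Longrightarrow> pl x y \<in> L"
  using mv unfolding mv_algebra_def by blast
lemma ng_in [simp]: "x \<in> L \<Longrightarrow> ng x \<in> L"
  using mv unfolding mv_algebra_def by blast
lemma pl_assoc: "x \<in> L \<Longrightarrow> y \<in> L \<Longrightarrow> w \<in> L \<Longrightarrow> pl x (pl y w) = pl (pl x y) w"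
  using mv unfolding mv_algebra_def by blast
lemma pl_comm: "x \<in> L \<Longrightarrow> y \<in> L \<Longrightarrow> pl x y = pl y x"
  using mv unfolding mv_algebra_def by blast
lemma pl_zero [simp]: "x \<in> L \<Longrightarrow> pl x z = x"
  using mv unfolding mv_algebra_def by blast
lemma ng_ng [simp]: "x \<in> L \<Longrightarrow> ng (ng x) = x"
  using mv unfolding mv_algebra_def by blast
lemma pl_one [simp]: "x \<in> L \<Longrightarrow> pl x (ng z) = ng z"
  using mv unfolding mv_algebra_def by blast
lemma lukasiewicz: "x \<in> L \<Longrightarrow> y \<in> L \<Longrightarrow> pl (ng (pl (ng x) y)) y = pl (ng (pl (ng y) x)) x"
  using mv unfolding mv_algebra_def by blast

lemma zero_pl [simp]: "x \<in> L \<Longrightarrow> pl z x = x"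
  using pl_comm pl_zero by (metis z_in)
lemma one_pl [simp]: "x \<in> L \<Longrightarrow> pl (ng z) x = ng z"
  using pl_comm pl_one by (metis z_in ng_in)

lemma ng_pl_self [simp]: "x \<in> L \<Longrightarrow> pl (ng x) x = ng z"
  using lukasiewicz[of x "ng z"] by simp
lemma pl_ng_self [simp]: "x \<in> L \<Longrightarrow> pl x (ng x) = ng z"
  using ng_pl_self pl_comm by (metis ng_in)

abbreviation imp where "imp x y \<equiv> pl (ng x) y"
abbreviation tensor where "tensor x y \<equiv> ng (pl (ng x) (ng y))"
abbreviation join where "join x y \<equiv> pl (ng (pl (ng x) y)) y"
abbreviation meet where "meet x y \<equiv> ng (join (ng x) (ng y))"

section \<open>The natural order\<close>

definition le :: "'a \<Rightarrow> 'a \<Rightarrow> bool" where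
  "le x y \<longleftrightarrow> imp x y = ng z"

lemma mv_le_eq: "mv_le pl ng z x y = le x y"
  by (simp add: mv_le_def mv_imp_def mv_one_def le_def)

lemma le_iff_pl: "x \<in> L \<Longrightarrow> y \<in> L \<Longrightarrow> le x y \<longleftrightarrow> (\<exists>d\<in>L. y = pl x d)"
proof
  assume x: "x \<in> L" and y: "y \<in> L" and "le x y"
  have "pl (ng (pl (ng y) x)) x = join x y" using lukasiewicz[OF x y] by simp
  also have "\<dots> = y" using \<open>le x y\<close> y by (simp add: le_def)
  finally have "y = pl x (ng (pl (ng y) x))" using x y pl_comm by simp
  then show "\<exists>d\<in>L. y = pl x d" using x y by (metis ng_in pl_in)
next
  assume x: "x \<in> L" and "\<exists>d\<in>L. y = pl x d"
  then show "le x y" by (auto simp add: pl_assoc le_def)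
qed

lemma le_one: "x \<in> L \<Longrightarrow> le x (ng z)"
  by (simp add: le_def)

lemma le_trans: assumes "x \<in> L" "y \<in> L" "w \<in> L" "le x y" "le y w" shows "le x w"
proof -
  obtain d1 where d1: "d1 \<in> L" "y = pl x d1" using assms le_iff_pl by blast
  obtain d2 where d2: "d2 \<in> L" "w = pl y d2" using assms le_iff_pl by blast
  have "w = pl x (pl d1 d2)" using d1 d2 assms by (simp add: pl_assoc)
  then show ?thesis using assms d1 d2 le_iff_pl pl_in by blast
qed

lemma le_antisym: "x \<in> L \<Longrightarrow> y \<in> L \<Longrightarrow> le x y \<Longrightarrow> le y x \<Longrightarrow> x = y"
  using lukasiewicz[of x y] by (simp add: le_def)

lemma pl_mono: assumes "x \<in> L" "y \<in> L" "w \<in> L" "le x y" shows "le (pl x w) (pl y w)"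
proof -
  obtain d where d: "d \<in> L" "y = pl x d" using assms le_iff_pl by blast
  have "pl y w = pl (pl x w) d"
    using d assms by (metis pl_assoc pl_comm)
  then show ?thesis using d assms le_iff_pl pl_in by blast
qed

lemma ng_antimono: "x \<in> L \<Longrightarrow> y \<in> L \<Longrightarrow> le x y \<Longrightarrow> le (ng y) (ng x)"
  using pl_comm[of "ng x" y] by (simp add: le_def)

lemma pl_upper: "x \<in> L \<Longrightarrow> y \<in> L \<Longrightarrow> le x (pl x y)"
  by (simp add: le_def pl_assoc)
lemma pl_upper2: "x \<in> L \<Longrightarrow> y \<in> L \<Longrightarrow> le y (pl x y)"
  using pl_upper[of y x] pl_comm[of x y] by simp

lemma imp_mono: "x \<in> L \<Longrightarrow> y \<in> L \<Longrightarrow> y' \<in> L \<Longrightarrow> le y y' \<Longrightarrow> le (imp x y) (imp x y')"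
  using pl_mono[of y y' "ng x"] pl_comm[of y "ng x"] pl_comm[of y' "ng x"] by simp
lemma imp_antimono: "x \<in> L \<Longrightarrow> x' \<in> L \<Longrightarrow> y \<in> L \<Longrightarrow> le x x' \<Longrightarrow> le (imp x' y) (imp x y)"
  using pl_mono[of "ng x'" "ng x" y] ng_antimono[of x x'] by simp

lemma imp_exchange: "x \<in> L \<Longrightarrow> y \<in> L \<Longrightarrow> t \<in> L \<Longrightarrow> imp x (imp y t) = imp y (imp x t)"
  using pl_assoc[of "ng x" "ng y" t] pl_assoc[of "ng y" "ng x" t] pl_comm[of "ng x" "ng y"] by simp

section \<open>The product and residuation\<close>

lemma tensor_comm: "x \<in> L \<Longrightarrow> y \<in> L \<Longrightarrow> tensor x y = tensor y x"
  using pl_comm[of "ng x" "ng y"] by simp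
lemma tensor_assoc: "x \<in> L \<Longrightarrow> y \<in> L \<Longrightarrow> w \<in> L \<Longrightarrow> tensor (tensor x y) w = tensor x (tensor y w)"
  using pl_assoc[of "ng x" "ng y" "ng w"] by simp

lemma tensor_mono: assumes "x \<in> L" "y \<in> L" "w \<in> L" "le x y" shows "le (tensor x w) (tensor y w)"
  using assms ng_antimono pl_mono by (metis ng_in pl_in)
lemma tensor_mono2: "x \<in> L \<Longrightarrow> y \<in> L \<Longrightarrow> w \<in> L \<Longrightarrow> le x y \<Longrightarrow> le (tensor w x) (tensor w y)"
  using tensor_mono tensor_comm by (metis)

lemma tensor_lower: "x \<in> L \<Longrightarrow> y \<in> L \<Longrightarrow> le (tensor x y) x"
  using ng_antimono[of "ng x" "pl (ng x) (ng y)"] pl_upper[of "ng x" "ng y"] by simp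
lemma tensor_lower2: "x \<in> L \<Longrightarrow> y \<in> L \<Longrightarrow> le (tensor x y) y"
  using tensor_lower[of y x] tensor_comm[of x y] by simp

lemma residuation: "x \<in> L \<Longrightarrow> y \<in> L \<Longrightarrow> w \<in> L \<Longrightarrow> le (tensor x y) w \<longleftrightarrow> le x (imp y w)"
  by (simp add: pl_assoc le_def)

lemma join_comm: "x \<in> L \<Longrightarrow> y \<in> L \<Longrightarrow> join x y = join y x"
  using lukasiewicz by blast
lemma join_upper2: "x \<in> L \<Longrightarrow> y \<in> L \<Longrightarrow> le y (join x y)"
  using pl_upper2 by simp
lemma join_upper1: "x \<in> L \<Longrightarrow> y \<in> L \<Longrightarrow> le x (join x y)"
  using join_upper2[of y x] join_comm[of x y] by simp

lemma join_least: assumes "x \<in> L" "y \<in> L" "w \<in> L" "le x w" "le y w" shows "le (join x y) w"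
proof -
  have "le (ng (imp x y)) (ng (imp w y))"
    using assms ng_antimono pl_mono by (metis ng_in pl_in)
  then have "le (join x y) (join w y)" using pl_mono assms by (metis ng_in pl_in)
  moreover have "join w y = w" using lukasiewicz[of w y] assms by (simp add: le_def)
  ultimately show ?thesis by simp
qed

lemma join_mono: assumes "x \<in> L" "y \<in> L" "x' \<in> L" "y' \<in> L" "le x x'" "le y y'"
  shows "le (join x y) (join x' y')"
proof (rule join_least)
  show "le x (join x' y')" using le_trans[of x x' "join x' y'"] join_upper1[of x' y'] assms by simp
  show "le y (join x' y')" using le_trans[of y y' "join x' y'"] join_upper2[of x' y'] assms by simp
qed (use assms in auto)

lemma modus_ponens: "x \<in> L \<Longrightarrow> y \<in> L \<Longrightarrow> le (tensor x (imp x y)) y"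
  using residuation[of x "imp x y" y] join_upper1[of x y] by simp

text \<open>The meet x \<and> y equals x \<odot> (x \<rightarrow> y); in particular this is symmetric.\<close>
lemma tensor_imp_comm: assumes "a \<in> L" "b \<in> L" shows "tensor a (imp a b) = tensor b (imp b a)"
proof -
  have "ng (join (ng b) (ng a)) = ng (join (ng a) (ng b))"
    using join_comm[of "ng b" "ng a"] assms by simp
  then show ?thesis
    using assms pl_comm[of b "ng a"] pl_comm[of "ng (imp a b)" "ng a"]
      pl_comm[of a "ng b"] pl_comm[of "ng (imp b a)" "ng b"] by simp
qed

section \<open>Inequalities for implication\<close>

text \<open>Prelinearity: (x \<rightarrow> y) \<or> (y \<rightarrow> x) = 1.  It is the source of the linearity of
  kernels of prime filters.\<close>
lemma prelinearity: assumes x: "x \<in> L" and y: "y \<in> L" shows "join (imp x y) (imp y x) = ng z"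
proof -
  define p where "p = ng (imp x y)"
  define q where "q = ng (imp y x)"
  define u where "u = pl x p"
  have pL: "p \<in> L" and qL: "q \<in> L" and uL: "u \<in> L" using assms by (auto simp: p_def q_def u_def)
  have neg_join: "ng (join (imp x y) (imp y x)) = tensor q (imp q p)"
    using assms pl_comm[of "imp x y" "imp y x"] pl_comm[of "ng (imp x y)" "imp y x"]
      pl_comm[of "ng (pl (imp y x) (ng (imp x y)))" "imp y x"] by (simp add: p_def q_def)
  have u_meet: "tensor (ng x) u = tensor p (imp p (ng x))"
    using tensor_imp_comm[of "ng x" p] assms pL by (simp add: u_def)
  have "imp q p = imp y u" using assms pL by (simp add: q_def u_def pl_assoc)
  moreover have "q = tensor (ng x) y" using assms tensor_comm[of y "ng x"] by (simp add: q_def)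
  ultimately have "tensor q (imp q p) = tensor (tensor (ng x) y) (imp y u)" by simp
  also have "\<dots> = tensor (ng x) (tensor u (imp u y))"
    using tensor_assoc[of "ng x" y "imp y u"] tensor_imp_comm[of y u] assms uL by simp
  also have "\<dots> = tensor (tensor (ng x) u) (imp u y)"
    using tensor_assoc[of "ng x" u "imp u y"] assms uL by simp
  also have "\<dots> = tensor (tensor p (imp p (ng x))) (imp u y)"
    using u_meet by simp
  finally have step1: "tensor q (imp q p) = tensor (tensor p (imp p (ng x))) (imp u y)" .
  have "le (tensor (tensor p (imp p (ng x))) (imp u y)) (tensor p (imp u y))"
    using tensor_mono[OF _ _ _ tensor_lower[of p "imp p (ng x)"], of "imp u y"] assms pL uL by simp
  moreover have "le (tensor p (imp u y)) (tensor p (imp x y))"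
    using tensor_mono2 imp_antimono[of x u y] pl_upper[of x p] assms pL uL by (simp add: u_def)
  moreover have "tensor p (imp x y) = z" using assms by (simp add: p_def)
  ultimately have "le (tensor q (imp q p)) z"
    using step1 le_trans assms pL qL uL by (metis ng_in pl_in)
  then have "le (ng (join (imp x y) (imp y x))) z" using neg_join by simp
  then have "le (ng z) (join (imp x y) (imp y x))"
    using ng_antimono[of "ng (join (imp x y) (imp y x))" z] assms by simp
  then show ?thesis using le_antisym le_one assms by simp
qed

lemma tensor_join_le: assumes "x \<in> L" "y \<in> L" "w \<in> L"
  shows "le (tensor x (join y w)) (join (tensor x y) (tensor x w))"
proof -
  define s where "s = join (tensor x y) (tensor x w)"
  have sL: "s \<in> L" using assms by (simp add: s_def)
  have "le y (imp x s)"
    using residuation[of y x s] join_upper1[of "tensor x y" "tensor x w"] tensor_comm[of x y] assms sL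
    by (simp add: s_def)
  moreover have "le w (imp x s)"
    using residuation[of w x s] join_upper2[of "tensor x y" "tensor x w"] tensor_comm[of x w] assms sL
    by (simp add: s_def)
  ultimately have "le (join y w) (imp x s)" using join_least assms sL by simp
  then show ?thesis using residuation[of "join y w" x s] tensor_comm[of x "join y w"] assms sL
    by (simp add: s_def)
qed

text \<open>Dually, (p \<rightarrow> r) \<and> (q \<rightarrow> r) \<le> (p \<or> q) \<rightarrow> r; this makes kernels of prime filters prime.\<close>
lemma meet_imp_le: "p \<in> L \<Longrightarrow> q \<in> L \<Longrightarrow> r \<in> L \<Longrightarrow> le (meet (imp p r) (imp q r)) (imp (join p q) r)"
  using ng_antimono[OF _ _ tensor_join_le[of "ng r" p q]]
    pl_comm[of r "ng p"] pl_comm[of r "ng q"] pl_comm[of r "ng (join p q)"] by simp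

lemma imp_trans: assumes "x \<in> L" "y \<in> L" "w \<in> L" shows "le (tensor (imp x y) (imp y w)) (imp x w)"
proof -
  define A where "A = imp x y"
  define B where "B = imp y w"
  have AL: "A \<in> L" and BL: "B \<in> L" using assms by (auto simp: A_def B_def)
  have "tensor (tensor A B) x = tensor B (tensor x A)"
    using tensor_comm[of A B] tensor_assoc[of B A x] tensor_comm[of A x] AL BL assms by simp
  moreover have "le (tensor x A) y" using modus_ponens[of x y] assms by (simp add: A_def)
  then have "le (tensor B (tensor x A)) (tensor B y)"
    using tensor_mono2[of "tensor x A" y B] AL BL assms by simp
  moreover have "le (tensor B y) w"
    using modus_ponens[of y w] tensor_comm[of B y] assms BL by (simp add: B_def)
  ultimately have "le (tensor (tensor A B) x) w" using le_trans AL BL assms by (metis ng_in pl_in)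
  then show ?thesis using residuation[of "tensor A B" x w] AL BL assms by (simp add: A_def B_def)
qed

lemma imp_prefix: "a \<in> L \<Longrightarrow> b \<in> L \<Longrightarrow> w \<in> L \<Longrightarrow> le (imp a b) (imp (imp w a) (imp w b))"
  using imp_trans[of w a b] tensor_comm[of "imp a b" "imp w a"]
    residuation[of "imp a b" "imp w a" "imp w b"] by simp

text \<open>Combined with
  primeness of kernels it yields the key step of the hard inclusion.\<close>
lemma join_split_bound: assumes "a \<in> L" "g \<in> L" "c \<in> L"
  shows "le (imp c g) (join (imp (imp (imp a g) c) a) (imp a g))"
proof -
  define m where "m = imp a g"
  define t where "t = imp m c"
  define s where "s = imp t (join a g)"
  have mL: "m \<in> L" and tL: "t \<in> L" and sL: "s \<in> L" using assms by (auto simp: m_def t_def s_def)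
  have "le (imp c g) s" using imp_prefix[of c g m] assms mL by (simp add: s_def t_def m_def)
  moreover have "s = tensor s (join m (imp g a))" using prelinearity[of a g] assms sL by (simp add: m_def)
  moreover have "le (tensor s (join m (imp g a))) (join (tensor s m) (tensor s (imp g a)))"
    using tensor_join_le[of s m "imp g a"] assms sL mL by simp
  moreover have "le (join (tensor s m) (tensor s (imp g a))) (join m (imp t a))"
  proof (rule join_mono)
    show "le (tensor s m) m" using tensor_lower2[of s m] sL mL by simp
    have "le (tensor s (imp g a)) (tensor s (imp (join a g) a))"
      using tensor_mono2 join_upper1[of "imp g a" a] join_comm[of a g] assms sL by simp
    moreover have "le (tensor s (imp (join a g) a)) (imp t a)"
      using imp_trans[of t "join a g" a] assms tL by (simp add: s_def)
    ultimately show "le (tensor s (imp g a)) (imp t a)" using le_trans assms sL tL by (metis ng_in pl_in)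
  qed (use assms sL mL tL in auto)
  ultimately have "le (imp c g) (join m (imp t a))" using le_trans assms sL mL tL by (metis ng_in pl_in)
  then show ?thesis using join_comm[of m "imp t a"] mL tL assms by (simp add: t_def m_def)
qed

section \<open>Upward-closed sets and their kernels\<close>

lemma up_closedD: "up_closed L pl ng z F \<Longrightarrow> x \<in> F \<Longrightarrow> y \<in> L \<Longrightarrow> le x y \<Longrightarrow> y \<in> F"
  unfolding up_closed_def mv_le_eq by blast
lemma up_closed_subset: "up_closed L pl ng z F \<Longrightarrow> F \<subseteq> L"
  unfolding up_closed_def by blast

lemma prime_filter_up_closed: "prime_filter L pl ng z F \<Longrightarrow> up_closed L pl ng z F"
  unfolding prime_filter_def lattice_filter_def by blast

lemma kernel_iff: "w \<in> kernel L pl ng F \<longleftrightarrow> w \<in> L \<and> (\<forall>a\<in>L - F. imp w a \<notin> F)"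
  unfolding kernel_def mv_imp_def by blast

lemma one_in_kernel: "ng z \<in> kernel L pl ng F"
  unfolding kernel_iff by simp

lemma kernel_mp: assumes F: "up_closed L pl ng z F" and p: "p \<in> F"
  and pa: "imp p a \<in> kernel L pl ng F" and a: "a \<in> L"
  shows "a \<in> F"
proof (rule ccontr)
  assume "a \<notin> F"
  then have "join p a \<notin> F" using pa a unfolding kernel_iff by blast
  moreover have "p \<in> L" using F p up_closed_subset by blast
  ultimately show False using up_closedD[OF F p] join_upper1[of p a] a by simp
qed

lemma kernel_up_closed: assumes F: "up_closed L pl ng z F" and p: "p \<in> kernel L pl ng F"
  and q: "q \<in> L" and pq: "le p q"
  shows "q \<in> kernel L pl ng F"
  unfolding kernel_iff
proof (intro conjI ballI notI)
  fix a assume a: "a \<in> L - F" and "imp q a \<in> F"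
  moreover have pL: "p \<in> L" using p kernel_iff by blast
  ultimately have "imp p a \<in> F" using up_closedD[OF F] imp_antimono[of p q a] q pq by simp
  then show False using p a unfolding kernel_iff by blast
qed (fact q)

lemma kernel_join_prime: assumes pf: "prime_filter L pl ng z F" and p: "p \<in> L" and q: "q \<in> L"
  and pq: "join p q \<in> kernel L pl ng F"
  shows "p \<in> kernel L pl ng F \<or> q \<in> kernel L pl ng F"
proof (rule ccontr)
  assume "\<not> ?thesis"
  then obtain s t where s: "s \<in> L - F" "imp p s \<in> F" and t: "t \<in> L - F" "imp q t \<in> F"
    using p q unfolding kernel_iff by blast
  have uc: "up_closed L pl ng z F" using pf by (rule prime_filter_up_closed)
  have meet_closed: "\<forall>x\<in>F. \<forall>y\<in>F. mv_inf pl ng x y \<in> F"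
    and prime: "\<forall>a\<in>L. \<forall>b\<in>L. mv_sup pl ng a b \<in> F \<longrightarrow> a \<in> F \<or> b \<in> F"
    using pf unfolding prime_filter_def lattice_filter_def by blast+
  define r where "r = join s t"
  have rL: "r \<in> L" using s t by (simp add: r_def)
  have rF: "r \<notin> F" using prime s t unfolding r_def mv_sup_def by blast
  have "imp p r \<in> F"
    using up_closedD[OF uc s(2)] imp_mono[of p s r] join_upper1[of s t] p s t rL by (simp add: r_def)
  moreover have "imp q r \<in> F"
    using up_closedD[OF uc t(2)] imp_mono[of q t r] join_upper2[of s t] q s t rL by (simp add: r_def)
  ultimately have "meet (imp p r) (imp q r) \<in> F"
    using meet_closed unfolding mv_inf_def mv_sup_def by blast
  then have "imp (join p q) r \<in> F" using up_closedD[OF uc] meet_imp_le[of p q r] p q rL by simp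
  then show False using pq rL rF unfolding kernel_iff by blast
qed

lemma kernel_linear: "prime_filter L pl ng z F \<Longrightarrow> p \<in> L \<Longrightarrow> q \<in> L \<Longrightarrow>
    imp p q \<in> kernel L pl ng F \<or> imp q p \<in> kernel L pl ng F"
  using kernel_join_prime[of F "imp p q" "imp q p"] prelinearity[of p q] one_in_kernel by simp

section \<open>The relative filter F \<sqsubseteq>\<rightarrow> G\<close>

lemma arrow_iff: "x \<in> filt_arrow L pl ng F G \<longleftrightarrow> x \<in> L \<and> (\<forall>b\<in>L - G. imp x b \<notin> F)"
  unfolding filt_arrow_def filt_sub_def mv_imp_def by blast

lemma arrow_up_closed: assumes F: "up_closed L pl ng z F"
  and x: "x \<in> filt_arrow L pl ng F G" and y: "y \<in> L" and xy: "le x y"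
  shows "y \<in> filt_arrow L pl ng F G"
  unfolding arrow_iff
proof (intro conjI ballI notI)
  fix b assume b: "b \<in> L - G" and "imp y b \<in> F"
  moreover have "x \<in> L" using x arrow_iff by blast
  ultimately have "imp x b \<in> F" using up_closedD[OF F] imp_antimono[of x y b] y xy by simp
  then show False using x b arrow_iff by blast
qed (fact y)

lemma kernel_subset_arrow_kernel:
  assumes F: "up_closed L pl ng z F" and KFG: "kernel L pl ng F \<subseteq> kernel L pl ng G"
  shows "kernel L pl ng F \<subseteq> kernel L pl ng (filt_arrow L pl ng F G)"
proof
  fix w assume wF: "w \<in> kernel L pl ng F"
  then have wL: "w \<in> L" using kernel_iff by blast
  show "w \<in> kernel L pl ng (filt_arrow L pl ng F G)" unfolding kernel_iff
  proof (intro conjI ballI notI)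
    fix a assume a: "a \<in> L - filt_arrow L pl ng F G" and wa: "imp w a \<in> filt_arrow L pl ng F G"
    then obtain b where b: "b \<in> L - G" "imp a b \<in> F" using arrow_iff by blast
    have "w \<in> kernel L pl ng G" using wF KFG by blast
    then have "imp w b \<notin> G" using b unfolding kernel_iff by blast
    then have "imp (imp w a) (imp w b) \<notin> F" using wa wL b arrow_iff by simp
    moreover have "imp (imp w a) (imp w b) \<in> F"
      using up_closedD[OF F b(2)] imp_prefix[of a b w] a b wL by simp
    ultimately show False by blast
  qed (fact wL)
qed

lemma arrow_kernel_excludes:
  assumes F: "up_closed L pl ng z F" and wH: "w \<in> kernel L pl ng (filt_arrow L pl ng F G)"
    and a: "a \<in> L" and wa: "imp w a \<in> F" and b: "b \<in> L - G"
  shows "imp a (imp w b) \<notin> filt_arrow L pl ng F G"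
proof
  let ?H = "filt_arrow L pl ng F G"
  assume ag: "imp a (imp w b) \<in> ?H"
  have wL: "w \<in> L" using wH kernel_iff by blast
  define x where "x = imp (imp w a) b"
  have xL: "x \<in> L" using a b wL by (simp add: x_def)
  have "imp x b \<in> F"
    using up_closedD[OF F wa] join_upper1[of "imp w a" b] xL a b wL by (simp add: x_def)
  then have "x \<notin> ?H" using arrow_iff b by blast
  then have "imp w (imp w x) \<notin> ?H" using wH xL wL unfolding kernel_iff by simp
  moreover have "imp w (imp w x) = imp (imp w a) (imp w (imp w b))"
    using imp_exchange[of w "imp w a" b] imp_exchange[of w "imp w a" "imp w b"] wL a b
    by (simp add: x_def)
  ultimately show False
    using arrow_up_closed[OF F ag] imp_prefix[of a "imp w b" w] a b wL by simp
qed

text \<open>If a \<notin> F and g \<in> G, then a \<rightarrow> g \<in> F \<sqsubseteq>\<rightarrow> G.  Otherwise some c \<notin> G has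
  k = (a \<rightarrow> g) \<rightarrow> c \<in> F; linearity of K(G) puts c \<rightarrow> g in K(G) \<subseteq> K(F), and the
  splitting bound together with primeness of K(F) contradicts a \<notin> F or k \<in> F.\<close>
lemma imp_in_arrow:
  assumes pF: "prime_filter L pl ng z F" and pG: "prime_filter L pl ng z G"
    and FG: "F \<subseteq> G" and KGF: "kernel L pl ng G \<subseteq> kernel L pl ng F"
    and a: "a \<in> L - F" and g: "g \<in> G"
  shows "imp a g \<in> filt_arrow L pl ng F G"
proof (rule ccontr)
  have ucF: "up_closed L pl ng z F" and ucG: "up_closed L pl ng z G"
    using pF pG by (simp_all add: prime_filter_up_closed)
  have gL: "g \<in> L" using g ucG up_closed_subset by blast
  assume "imp a g \<notin> filt_arrow L pl ng F G"
  then obtain c where c: "c \<in> L - G" and kF: "imp (imp a g) c \<in> F"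
    using arrow_iff a gL by auto
  define k where "k = imp (imp a g) c"
  have kL: "k \<in> L" using a gL c by (simp add: k_def)
  have kF': "k \<in> F" using kF by (simp add: k_def)
  have "imp g c \<notin> kernel L pl ng G" using kernel_mp[OF ucG g, of c] c by blast
  then have "imp c g \<in> kernel L pl ng F" using kernel_linear[OF pG, of g c] gL c KGF by blast
  then have "join (imp k a) (imp a g) \<in> kernel L pl ng F"
    using kernel_up_closed[OF ucF] join_split_bound[of a g c] a gL c kL by (simp add: k_def)
  then consider "imp k a \<in> kernel L pl ng F" | "imp a g \<in> kernel L pl ng F"
    using kernel_join_prime[OF pF, of "imp k a" "imp a g"] a gL kL by auto
  then show False
  proof cases
    case 1
    then show False using kernel_mp[OF ucF kF' 1] a by blast
  next
    case 2
    moreover have "c \<in> L - F" using c FG by blast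
    ultimately show False using kF unfolding kernel_iff by blast
  qed
qed

lemma arrow_kernel_subset_kernel:
  assumes pF: "prime_filter L pl ng z F" and pG: "prime_filter L pl ng z G"
    and FG: "F \<subseteq> G" and KGF: "kernel L pl ng G \<subseteq> kernel L pl ng F"
  shows "kernel L pl ng (filt_arrow L pl ng F G) \<subseteq> kernel L pl ng F"
proof
  fix w assume wH: "w \<in> kernel L pl ng (filt_arrow L pl ng F G)"
  then have wL: "w \<in> L" using kernel_iff by blast
  show "w \<in> kernel L pl ng F"
  proof (rule ccontr)
    assume wF: "w \<notin> kernel L pl ng F"
    then obtain a where a: "a \<in> L - F" "imp w a \<in> F" using wL unfolding kernel_iff by blast
    have "w \<notin> kernel L pl ng G" using wF KGF by blast
    then obtain b where b: "b \<in> L - G" "imp w b \<in> G" using wL unfolding kernel_iff by blast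
    have "imp a (imp w b) \<notin> filt_arrow L pl ng F G"
      using arrow_kernel_excludes[OF prime_filter_up_closed[OF pF] wH] a b by blast
    moreover have "imp a (imp w b) \<in> filt_arrow L pl ng F G"
      using imp_in_arrow[OF pF pG FG KGF a(1) b(2)] .
    ultimately show False by blast
  qed
qed

end

theorem mainTheorem11:
  fixes L :: "'a set" and pl :: "'a \<Rightarrow> 'a \<Rightarrow> 'a" and ng :: "'a \<Rightarrow> 'a" and z :: 'a
    and F G :: "'a set"
  assumes "mv_algebra L pl ng z"
    and "prime_filter L pl ng z F"
    and "prime_filter L pl ng z G"
    and "F \<subseteq> G"
    and "kernel L pl ng F = kernel L pl ng G"
  shows "kernel L pl ng (filt_arrow L pl ng F G) = kernel L pl ng F"
proof -
  interpret mv_alg L pl ng z using assms(1) by (rule mv_alg.intro)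
  show ?thesis
  proof
    show "kernel L pl ng (filt_arrow L pl ng F G) \<subseteq> kernel L pl ng F"
      by (rule arrow_kernel_subset_kernel) (use assms in auto)
    show "kernel L pl ng F \<subseteq> kernel L pl ng (filt_arrow L pl ng F G)"
      by (rule kernel_subset_arrow_kernel) (use assms prime_filter_up_closed in auto)
  qed
qed

end
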